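(* Let $X_1,\dots,X_M$ be independent real random variables with $\mathbb{E}[X_i]=0$ and $\mathbb{E}[\exp(|X_i|^{\gamma_0}/b^{\gamma_0})]\leq2$ for all $i$, for some $\gamma_0>0$, $b>0$. Let $X:=\sum_{i=1}^MX_i$. Then for every $V\geq\operatorname{Var}X$ and every $$0\leq r\leq\sqrt V\min\Big\{\frac{\sqrt V}{b(2\log(2M))^{1/\gamma_0}},\Big(\frac{\sqrt V}{b}\Big)^{\gamma_0/(2+\gamma_0)}\Big\}$$ one has $\mathbb P\big[|X|\geq r\big]\leq3\exp\big(-\frac{r^2}{10V}\big)$. *)

theory Defs
  imports "HOL-Probability.Probability"
begin

end

theory Submission
  imports Defs
begin

text \<open>Truncate every summand at a level \<open>T\<close> chosen so that, by the exponential moment bound and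
  Markov's inequality, no summand exceeds \<open>T\<close> except with probability \<open>Q = exp (- r\<^sup>2 / (10 V))\<close>.
  The centred truncations are independent, bounded by \<open>2 T\<close> and have total second moment at
  most \<open>V\<close>, so their sum obeys a Bernstein-type bound obtained from \<open>exp x \<le> 1 + x + x\<^sup>2\<close> for
  \<open>\<bar>x\<bar> \<le> 1\<close>; the hypothesis on \<open>r\<close> is exactly what makes \<open>T r \<le> V\<close>, which keeps the Bernstein
  parameter admissible. Since the summands are centred, the means of the truncations only see
  the tails and shift the sum by little. When \<open>3 Q \<ge> 1\<close> there is nothing to prove.\<close>

lemma exp_le_one_plus_x_plus_square:
  fixes x :: real
  assumes "\<bar>x\<bar> \<le> 1"
  shows "exp x \<le> 1 + x + x^2"
proof (cases "x \<ge> 0")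
  case True
  then show ?thesis using exp_bound[of x] assms by auto
next
  case False
  have lower: "1 - x + x^2/2 \<le> exp (-x)"
    using exp_lower_Taylor_quadratic[of "-x"] False by simp
  have x2: "x^2 > 0" using False by simp
  have pos: "0 < 1 - x + x^2/2" using False x2 by linarith
  have "1 \<le> (1 + x + x^2) * (1 - x + x^2/2)"
  proof -
    have "(1 + x + x^2) * (1 - x + x^2/2) = 1 + x^2/2 - x^3/2 + x^4/2"
      by (simp add: field_simps eval_nat_numeral)
    moreover have "x^3 \<le> 0" using False by (simp add: power_le_zero_eq)
    moreover have "x^4 \<ge> 0" by simp
    ultimately show ?thesis using x2 by linarith
  qed
  then have "1 / (1 - x + x^2/2) \<le> 1 + x + x^2"
    by (subst pos_divide_le_eq[OF pos])
  moreover have "exp x \<le> 1 / (1 - x + x^2/2)"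
    using lower pos by (simp add: exp_minus field_simps)
  ultimately show ?thesis by linarith
qed

lemma abs_le_square_plus_inverse:
  fixes x e :: real
  assumes "e > 0"
  shows "\<bar>x\<bar> \<le> e * x^2 / 2 + 1 / (2 * e)"
proof -
  have "0 \<le> (e * \<bar>x\<bar> - 1)^2" by simp
  then have "2 * e * \<bar>x\<bar> \<le> e^2 * x^2 + 1" by (simp add: power2_eq_square algebra_simps)
  then show ?thesis using assms by (simp add: field_simps power2_eq_square)
qed

lemma square_le_exp_powr_bound:
  fixes x b g :: real and k :: nat
  assumes b: "b > 0" and g: "g > 0" and k: "k > 0" "2 \<le> g * k"
  shows "x^2 \<le> b^2 + b^2 * (real k ^ k * exp (\<bar>x\<bar> powr g / b powr g))"
proof -
  define u where "u = \<bar>x\<bar> / b"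
  have x_eq: "x^2 = b^2 * u^2" using b by (simp add: u_def power_divide)
  show ?thesis
  proof (cases "u \<le> 1")
    case True
    then have "u^2 \<le> 1" using b by (intro power_le_one) (auto simp: u_def)
    then have "x^2 \<le> b^2" unfolding x_eq using b by (simp add: mult_left_le)
    then show ?thesis by (simp add: add_increasing2)
  next
    case False
    define y where "y = u powr g"
    have y0: "y \<ge> 0" by (simp add: y_def)
    have "u^2 = u powr 2" using False by (simp add: powr_realpow)
    also have "\<dots> \<le> u powr (g * k)" using False k by (intro powr_mono) auto
    also have "\<dots> = real k ^ k * (y / k) ^ k"
      using False k by (simp add: y_def powr_powr[symmetric] powr_realpow power_divide)
    also have "\<dots> \<le> real k ^ k * (1 + y / k) ^ k"
      using y0 by (intro mult_left_mono power_mono) auto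
    also have "\<dots> \<le> real k ^ k * exp y"
      using y0 k by (intro mult_left_mono exp_ge_one_plus_x_over_n_power_n) auto
    finally have "x^2 \<le> b^2 * (real k ^ k * exp y)"
      unfolding x_eq using b by (intro mult_left_mono) auto
    moreover have "y = \<bar>x\<bar> powr g / b powr g" using b by (simp add: y_def u_def powr_divide)
    ultimately show ?thesis by (simp add: add_increasing)
  qed
qed

lemma truncation_level_times_radius_le:
  fixes g b V r L :: real
  assumes g: "g > 0" and b: "b > 0" and V: "V > 0" and r: "r \<ge> 0" and L: "L > 0"
    and r_le: "r \<le> sqrt V * min (sqrt V / (b * (2 * L) powr (1 / g)))
                                 ((sqrt V / b) powr (g / (2 + g)))"
  shows "b * (L + r^2 / (10 * V)) powr (1 / g) * r \<le> V"
proof -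
  define s where "s = L + r^2 / (10 * V)"
  have s0: "s \<ge> 0" using L V by (simp add: s_def)
  have sqrt_V: "sqrt V * sqrt V = V" using V by simp
  show ?thesis
  proof (cases "r^2 / (10 * V) \<le> L")
    case True
    define D where "D = b * (2 * L) powr (1 / g)"
    have D: "D > 0" using b L by (simp add: D_def)
    have "r \<le> sqrt V * (sqrt V / D)"
      using order.trans[OF r_le mult_left_mono[OF min.cobounded1]] V by (simp add: D_def)
    then have rD: "r * D \<le> V" using D sqrt_V by (simp add: field_simps)
    have "s powr (1/g) \<le> (2 * L) powr (1/g)"
      using True s0 g by (intro powr_mono2) (auto simp: s_def)
    then have "b * s powr (1/g) * r \<le> D * r"
      using b r by (intro mult_right_mono) (auto simp: D_def)
    then show ?thesis using rD by (simp add: s_def mult.commute)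
  next
    case False
    define q where "q = sqrt V / b"
    have q: "q > 0" using V b by (simp add: q_def)
    have r_q: "r \<le> sqrt V * q powr (g / (2 + g))"
      using order.trans[OF r_le mult_left_mono[OF min.cobounded2]] V by (simp add: q_def)
    have "r^2 / V = (r / sqrt V)^2" using V by (simp add: power_divide)
    also have "\<dots> \<le> (q powr (g / (2 + g)))^2"
      using r_q r V by (intro power_mono) (auto simp: field_simps)
    also have "\<dots> = q powr (2 * g / (2 + g))"
      using q by (simp add: powr_realpow[symmetric] powr_powr mult.commute)
    finally have r2_q: "r^2 / V \<le> q powr (2 * g / (2 + g))" .
    have "s \<le> r^2 / V"
      using False V by (simp add: s_def field_simps) (use zero_le_power2[of r] in linarith)
    then have "s powr (1/g) \<le> (q powr (2 * g / (2 + g))) powr (1/g)"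
      using r2_q s0 g by (intro powr_mono2) auto
    also have "\<dots> = q powr (2 / (2 + g))" using g by (simp add: powr_powr)
    finally have "b * s powr (1/g) * r \<le> b * q powr (2 / (2 + g)) * (sqrt V * q powr (g / (2 + g)))"
      using b r r_q by (intro mult_mono) auto
    also have "\<dots> = b * sqrt V * (q powr (2 / (2 + g)) * q powr (g / (2 + g)))"
      by (simp add: algebra_simps)
    also have "q powr (2 / (2 + g)) * q powr (g / (2 + g)) = q"
      using q g by (simp add: powr_add[symmetric] add_divide_distrib[symmetric])
    also have "b * sqrt V * q = V" using b sqrt_V by (simp add: q_def)
    finally show ?thesis by (simp add: s_def)
  qed
qed

definition truncate :: "real \<Rightarrow> real \<Rightarrow> real" where
  "truncate T x = (if \<bar>x\<bar> \<le> T then x else 0)"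

lemma borel_measurable_truncate [measurable]: "truncate T \<in> borel_measurable borel"
  unfolding truncate_def by measurable

lemma abs_truncate_le: "0 \<le> T \<Longrightarrow> \<bar>truncate T x\<bar> \<le> T"
  by (simp add: truncate_def)

lemma abs_truncate_le_abs: "\<bar>truncate T x\<bar> \<le> \<bar>x\<bar>"
  by (simp add: truncate_def)

lemma abs_diff_truncate_le:
  fixes x e :: real
  assumes "e > 0"
  shows "\<bar>x - truncate T x\<bar> \<le> e * x^2 / 2 + of_bool (T < \<bar>x\<bar>) / (2 * e)"
  using abs_le_square_plus_inverse[OF assms, of x] assms by (simp add: truncate_def)

context prob_space
begin

lemma expectation_exp_le_of_bounded:
  fixes Z :: "'a \<Rightarrow> real"
  assumes meas: "Z \<in> borel_measurable M"
    and bound: "\<And>\<omega>. \<omega> \<in> space M \<Longrightarrow> \<bar>Z \<omega>\<bar> \<le> K"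
    and mean: "expectation Z = 0"
    and l: "0 < l" "l * K \<le> 1"
  shows "integrable M (\<lambda>\<omega>. exp (l * Z \<omega>))"
    and "expectation (\<lambda>\<omega>. exp (l * Z \<omega>)) \<le> exp (l^2 * expectation (\<lambda>\<omega>. (Z \<omega>)^2))"
proof -
  have int_Z: "integrable M Z"
    using bound meas by (intro integrable_const_bound[where B=K]) auto
  have int_Z2: "integrable M (\<lambda>\<omega>. (Z \<omega>)^2)"
  proof (rule integrable_const_bound[where B="K^2"])
    show "AE \<omega> in M. norm ((Z \<omega>)^2) \<le> K^2"
      using power_mono[OF bound abs_ge_zero, of _ 2] by (intro AE_I2) simp
  qed (use meas in measurable)
  show int_exp: "integrable M (\<lambda>\<omega>. exp (l * Z \<omega>))"
    using bound meas l by (intro integrable_const_bound[where B="exp (l * K)"]) (auto simp: abs_le_iff)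
  have "expectation (\<lambda>\<omega>. exp (l * Z \<omega>)) \<le> expectation (\<lambda>\<omega>. 1 + l * Z \<omega> + l^2 * (Z \<omega>)^2)"
  proof (rule integral_mono)
    fix \<omega> assume "\<omega> \<in> space M"
    then have "\<bar>l * Z \<omega>\<bar> \<le> l * K" using bound l by (simp add: abs_mult)
    then have "\<bar>l * Z \<omega>\<bar> \<le> 1" using l by linarith
    then show "exp (l * Z \<omega>) \<le> 1 + l * Z \<omega> + l^2 * (Z \<omega>)^2"
      using exp_le_one_plus_x_plus_square[of "l * Z \<omega>"] by (simp add: power_mult_distrib)
  qed (use int_exp int_Z int_Z2 in auto)
  also have "\<dots> = 1 + l^2 * expectation (\<lambda>\<omega>. (Z \<omega>)^2)"
    using int_Z int_Z2 mean by (simp add: prob_space)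
  also have "\<dots> \<le> exp (l^2 * expectation (\<lambda>\<omega>. (Z \<omega>)^2))"
    by (rule exp_ge_add_one_self)
  finally show "expectation (\<lambda>\<omega>. exp (l * Z \<omega>)) \<le> exp (l^2 * expectation (\<lambda>\<omega>. (Z \<omega>)^2))" .
qed

lemma Bernstein_ineq_ge:
  fixes Z :: "'i \<Rightarrow> 'a \<Rightarrow> real"
  assumes fin: "finite I" and indep: "indep_vars (\<lambda>_. borel) Z I"
    and meas: "\<And>i. i \<in> I \<Longrightarrow> Z i \<in> borel_measurable M"
    and bound: "\<And>i \<omega>. i \<in> I \<Longrightarrow> \<omega> \<in> space M \<Longrightarrow> \<bar>Z i \<omega>\<bar> \<le> K"
    and mean: "\<And>i. i \<in> I \<Longrightarrow> expectation (Z i) = 0"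
    and var: "(\<Sum>i\<in>I. expectation (\<lambda>\<omega>. (Z i \<omega>)^2)) \<le> W"
    and l: "0 < l" "l * K \<le> 1"
  shows "prob {\<omega> \<in> space M. t \<le> (\<Sum>i\<in>I. Z i \<omega>)} \<le> exp (- l * t + l^2 * W)"
proof -
  note mgf = expectation_exp_le_of_bounded[OF meas bound mean l]
  have indep_exp: "indep_vars (\<lambda>_. borel) (\<lambda>i \<omega>. exp (l * Z i \<omega>)) I"
    by (rule indep_vars_compose2[OF indep]) auto
  have mgf_prod: "expectation (\<lambda>\<omega>. \<Prod>i\<in>I. exp (l * Z i \<omega>)) = (\<Prod>i\<in>I. expectation (\<lambda>\<omega>. exp (l * Z i \<omega>)))"
    and int_prod: "integrable M (\<lambda>\<omega>. \<Prod>i\<in>I. exp (l * Z i \<omega>))"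
    using indep_vars_lebesgue_integral[OF fin indep_exp mgf(1)]
      indep_vars_integrable[OF fin indep_exp mgf(1)] by auto
  have "prob {\<omega> \<in> space M. t \<le> (\<Sum>i\<in>I. Z i \<omega>)}
      \<le> prob {\<omega> \<in> space M. exp (l * t) \<le> (\<Prod>i\<in>I. exp (l * Z i \<omega>))}"
    using l meas
    by (intro finite_measure_mono)
      (auto simp: exp_sum[OF fin, symmetric] sum_distrib_left[symmetric] mult_left_mono)
  also have "\<dots> \<le> expectation (\<lambda>\<omega>. \<Prod>i\<in>I. exp (l * Z i \<omega>)) / exp (l * t)"
    by (rule integral_Markov_inequality_measure[OF int_prod])
      (use meas in \<open>auto intro!: prod_nonneg\<close>)
  also have "\<dots> \<le> (\<Prod>i\<in>I. exp (l^2 * expectation (\<lambda>\<omega>. (Z i \<omega>)^2))) / exp (l * t)"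
    unfolding mgf_prod by (intro divide_right_mono prod_mono) (auto simp: mgf(2))
  also have "\<dots> = exp (l^2 * (\<Sum>i\<in>I. expectation (\<lambda>\<omega>. (Z i \<omega>)^2)) - l * t)"
    by (simp add: exp_sum[OF fin, symmetric] sum_distrib_left exp_diff)
  also have "\<dots> \<le> exp (- l * t + l^2 * W)"
    using var by (simp add: mult_left_mono)
  finally show ?thesis .
qed

lemma Bernstein_ineq_abs_ge:
  fixes Z :: "'i \<Rightarrow> 'a \<Rightarrow> real"
  assumes fin: "finite I" and indep: "indep_vars (\<lambda>_. borel) Z I"
    and meas: "\<And>i. i \<in> I \<Longrightarrow> Z i \<in> borel_measurable M"
    and bound: "\<And>i \<omega>. i \<in> I \<Longrightarrow> \<omega> \<in> space M \<Longrightarrow> \<bar>Z i \<omega>\<bar> \<le> K"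
    and mean: "\<And>i. i \<in> I \<Longrightarrow> expectation (Z i) = 0"
    and var: "(\<Sum>i\<in>I. expectation (\<lambda>\<omega>. (Z i \<omega>)^2)) \<le> W"
    and l: "0 < l" "l * K \<le> 1"
  shows "prob {\<omega> \<in> space M. t \<le> \<bar>\<Sum>i\<in>I. Z i \<omega>\<bar>} \<le> 2 * exp (- l * t + l^2 * W)"
proof -
  have "{\<omega> \<in> space M. t \<le> \<bar>\<Sum>i\<in>I. Z i \<omega>\<bar>} =
      {\<omega> \<in> space M. t \<le> (\<Sum>i\<in>I. Z i \<omega>)} \<union> {\<omega> \<in> space M. t \<le> (\<Sum>i\<in>I. - Z i \<omega>)}"
    by (auto simp: sum_negf abs_if)
  also have "prob \<dots> \<le> prob {\<omega> \<in> space M. t \<le> (\<Sum>i\<in>I. Z i \<omega>)}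
      + prob {\<omega> \<in> space M. t \<le> (\<Sum>i\<in>I. - Z i \<omega>)}"
  proof (intro measure_Un_le)
    have "(\<lambda>\<omega>. \<Sum>i\<in>I. Z i \<omega>) \<in> borel_measurable M"
      and "(\<lambda>\<omega>. \<Sum>i\<in>I. - Z i \<omega>) \<in> borel_measurable M"
      using meas by (auto intro!: borel_measurable_sum)
    then show "{\<omega> \<in> space M. t \<le> (\<Sum>i\<in>I. Z i \<omega>)} \<in> events"
      and "{\<omega> \<in> space M. t \<le> (\<Sum>i\<in>I. - Z i \<omega>)} \<in> events"
      by measurable
  qed
  also have "\<dots> \<le> exp (- l * t + l^2 * W) + exp (- l * t + l^2 * W)"
  proof (intro add_mono Bernstein_ineq_ge[OF fin _ _ _ _ _ l])
    show "indep_vars (\<lambda>_. borel) (\<lambda>i \<omega>. - Z i \<omega>) I"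
      by (rule indep_vars_compose2[OF indep]) auto
  qed (use assms in auto)
  finally show ?thesis by simp
qed

lemma integrable_exp_moment:
  fixes f :: "'a \<Rightarrow> real"
  assumes f: "f \<in> borel_measurable M"
    and moment: "(\<integral>\<^sup>+ \<omega>. ennreal (exp (\<bar>f \<omega>\<bar> powr g / b powr g)) \<partial>M) \<le> 2"
  shows "integrable M (\<lambda>\<omega>. exp (\<bar>f \<omega>\<bar> powr g / b powr g))"
  using f order.strict_trans1[OF moment] by (intro integrableI_nonneg) auto

lemma expectation_exp_moment_le:
  fixes f :: "'a \<Rightarrow> real"
  assumes f: "f \<in> borel_measurable M"
    and moment: "(\<integral>\<^sup>+ \<omega>. ennreal (exp (\<bar>f \<omega>\<bar> powr g / b powr g)) \<partial>M) \<le> 2"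
  shows "expectation (\<lambda>\<omega>. exp (\<bar>f \<omega>\<bar> powr g / b powr g)) \<le> 2"
proof -
  have "expectation (\<lambda>\<omega>. exp (\<bar>f \<omega>\<bar> powr g / b powr g))
      = enn2real (\<integral>\<^sup>+ \<omega>. ennreal (exp (\<bar>f \<omega>\<bar> powr g / b powr g)) \<partial>M)"
    using f by (intro integral_eq_nn_integral) auto
  also have "\<dots> \<le> 2" using enn2real_mono[OF moment] by simp
  finally show ?thesis .
qed

lemma exp_moment_tail_le:
  fixes f :: "'a \<Rightarrow> real"
  assumes f: "f \<in> borel_measurable M"
    and moment: "(\<integral>\<^sup>+ \<omega>. ennreal (exp (\<bar>f \<omega>\<bar> powr g / b powr g)) \<partial>M) \<le> 2"
    and g: "g > 0" and b: "b > 0" and s: "s > 0"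
  shows "prob {\<omega> \<in> space M. b * s powr (1/g) < \<bar>f \<omega>\<bar>} \<le> 2 * exp (- s)"
proof -
  have "s \<le> \<bar>x\<bar> powr g / b powr g" if "b * s powr (1/g) < \<bar>x\<bar>" for x :: real
  proof -
    have "b powr g * s = (b * s powr (1/g)) powr g"
      using b s g by (simp add: powr_mult powr_powr)
    also have "\<dots> \<le> \<bar>x\<bar> powr g" using that b s g by (intro powr_mono2) auto
    finally show ?thesis using b by (simp add: field_simps)
  qed
  then have "prob {\<omega> \<in> space M. b * s powr (1/g) < \<bar>f \<omega>\<bar>}
      \<le> prob {\<omega> \<in> space M. exp s \<le> exp (\<bar>f \<omega>\<bar> powr g / b powr g)}"
    using f by (intro finite_measure_mono) auto
  also have "\<dots> \<le> expectation (\<lambda>\<omega>. exp (\<bar>f \<omega>\<bar> powr g / b powr g)) / exp s"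
    using f by (intro integral_Markov_inequality_measure integrable_exp_moment[OF f moment]) auto
  also have "\<dots> \<le> 2 / exp s"
    using expectation_exp_moment_le[OF f moment] by (simp add: divide_right_mono)
  finally show ?thesis by (simp add: exp_minus field_simps)
qed

lemma integrable_square_of_exp_moment:
  fixes f :: "'a \<Rightarrow> real"
  assumes f: "f \<in> borel_measurable M"
    and moment: "(\<integral>\<^sup>+ \<omega>. ennreal (exp (\<bar>f \<omega>\<bar> powr g / b powr g)) \<partial>M) \<le> 2"
    and g: "g > 0" and b: "b > 0"
  shows "integrable M (\<lambda>\<omega>. (f \<omega>)^2)"
proof -
  define k where "k = nat \<lceil>2 / g\<rceil> + 1"
  have "2 / g \<le> real k" unfolding k_def by linarith
  then have k: "k > 0" "2 \<le> g * real k" using g by (simp_all add: k_def field_simps)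
  show ?thesis
  proof (rule Bochner_Integration.integrable_bound)
    show "integrable M (\<lambda>\<omega>. b^2 + b^2 * (real k ^ k * exp (\<bar>f \<omega>\<bar> powr g / b powr g)))"
      using integrable_exp_moment[OF f moment] by auto
    show "AE \<omega> in M. norm ((f \<omega>)^2) \<le> norm (b^2 + b^2 * (real k ^ k * exp (\<bar>f \<omega>\<bar> powr g / b powr g)))"
      using square_le_exp_powr_bound[OF b g k] by (intro AE_I2) (auto intro: order.trans[OF _ abs_ge_self])
  qed (use f in measurable)
qed

lemma variance_indep_sum_mean_zero:
  fixes X :: "'i \<Rightarrow> 'a \<Rightarrow> real"
  assumes fin: "finite I" and indep: "indep_vars (\<lambda>_. borel) X I"
    and meas: "\<And>i. i \<in> I \<Longrightarrow> X i \<in> borel_measurable M"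
    and sq: "\<And>i. i \<in> I \<Longrightarrow> integrable M (\<lambda>\<omega>. (X i \<omega>)^2)"
    and mean: "\<And>i. i \<in> I \<Longrightarrow> expectation (X i) = 0"
  shows "variance (\<lambda>\<omega>. \<Sum>i\<in>I. X i \<omega>) = (\<Sum>i\<in>I. expectation (\<lambda>\<omega>. (X i \<omega>)^2))"
proof -
  have int: "integrable M (X i)" if "i \<in> I" for i
    using that by (intro square_integrable_imp_integrable[OF meas sq])
  have int_prod: "integrable M (\<lambda>\<omega>. X i \<omega> * X j \<omega>)" if "i \<in> I" "j \<in> I" for i j
  proof (rule Bochner_Integration.integrable_bound)
    show "integrable M (\<lambda>\<omega>. (X i \<omega>)^2 + (X j \<omega>)^2)" using that sq by simp
    have "\<bar>x * y\<bar> \<le> x^2 + y^2" for x y :: real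
      using sum_squares_bound[of "\<bar>x\<bar>" "\<bar>y\<bar>"]
      by (simp add: abs_mult) (use mult_nonneg_nonneg[OF abs_ge_zero abs_ge_zero, of x y] in linarith)
    then show "AE \<omega> in M. norm (X i \<omega> * X j \<omega>) \<le> norm ((X i \<omega>)^2 + (X j \<omega>)^2)"
      by (intro AE_I2) simp
  qed (use that meas in measurable)
  have inner: "(\<Sum>j\<in>I. expectation (\<lambda>\<omega>. X i \<omega> * X j \<omega>)) = expectation (\<lambda>\<omega>. (X i \<omega>)^2)"
    if i: "i \<in> I" for i
  proof -
    have "expectation (\<lambda>\<omega>. X i \<omega> * X j \<omega>) = 0" if "j \<in> I" "j \<noteq> i" for j
    proof -
      have "indep_vars (\<lambda>_. borel) X {i, j}" using i that by (intro indep_vars_subset[OF indep]) auto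
      then have "expectation (\<lambda>\<omega>. \<Prod>k\<in>{i,j}. X k \<omega>) = (\<Prod>k\<in>{i,j}. expectation (X k))"
        using i that int by (intro indep_vars_lebesgue_integral) auto
      then show ?thesis using i that mean by simp
    qed
    then have "(\<Sum>j\<in>I. expectation (\<lambda>\<omega>. X i \<omega> * X j \<omega>)) = (\<Sum>j\<in>{i}. expectation (\<lambda>\<omega>. X i \<omega> * X j \<omega>))"
      using fin i by (intro sum.mono_neutral_right) auto
    then show ?thesis by (simp add: power2_eq_square)
  qed
  have "expectation (\<lambda>\<omega>. \<Sum>i\<in>I. X i \<omega>) = 0"
    by (simp add: Bochner_Integration.integral_sum int mean)
  then have "variance (\<lambda>\<omega>. \<Sum>i\<in>I. X i \<omega>) = expectation (\<lambda>\<omega>. \<Sum>i\<in>I. \<Sum>j\<in>I. X i \<omega> * X j \<omega>)"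
    by (simp add: power2_eq_square sum_product)
  also have "\<dots> = (\<Sum>i\<in>I. \<Sum>j\<in>I. expectation (\<lambda>\<omega>. X i \<omega> * X j \<omega>))"
    by (simp add: Bochner_Integration.integral_sum int_prod)
  also have "\<dots> = (\<Sum>i\<in>I. expectation (\<lambda>\<omega>. (X i \<omega>)^2))"
    by (rule sum.cong[OF refl inner])
  finally show ?thesis .
qed

lemma centred_truncation:
  fixes f :: "'a \<Rightarrow> real"
  assumes f: "f \<in> borel_measurable M" and sq: "integrable M (\<lambda>\<omega>. (f \<omega>)^2)" and T: "0 \<le> T"
  defines "Z \<equiv> \<lambda>\<omega>. truncate T (f \<omega>) - expectation (\<lambda>\<omega>. truncate T (f \<omega>))"
  shows "Z \<in> borel_measurable M"
    and "\<bar>Z \<omega>\<bar> \<le> 2 * T"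
    and "expectation Z = 0"
    and "expectation (\<lambda>\<omega>. (Z \<omega>)^2) \<le> expectation (\<lambda>\<omega>. (f \<omega>)^2)"
proof -
  define Y where "Y = (\<lambda>\<omega>. truncate T (f \<omega>))"
  have Z_eq: "Z = (\<lambda>\<omega>. Y \<omega> - expectation Y)" by (simp add: Z_def Y_def)
  have Y: "Y \<in> borel_measurable M" using f by (simp add: Y_def)
  have bound: "\<bar>Y \<omega>\<bar> \<le> T" for \<omega> using T by (simp add: Y_def abs_truncate_le)
  have int_Y: "integrable M Y" using Y bound by (intro integrable_const_bound[where B=T]) auto
  have int_Y2: "integrable M (\<lambda>\<omega>. (Y \<omega>)^2)"
    using Y power_mono[OF bound abs_ge_zero, of _ 2]
    by (intro integrable_const_bound[where B="T^2"]) auto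
  have "\<bar>expectation Y\<bar> \<le> expectation (\<lambda>\<omega>. \<bar>Y \<omega>\<bar>)" by (rule integral_abs_bound)
  also have "\<dots> \<le> expectation (\<lambda>_. T)" using int_Y bound by (intro integral_mono) auto
  finally have mean_bound: "\<bar>expectation Y\<bar> \<le> T" by (simp add: prob_space)
  show "Z \<in> borel_measurable M" unfolding Z_eq using Y by measurable
  show "\<bar>Z \<omega>\<bar> \<le> 2 * T" unfolding Z_eq using bound[of \<omega>] mean_bound by linarith
  show "expectation Z = 0" unfolding Z_eq using int_Y by (simp add: prob_space)
  have "expectation (\<lambda>\<omega>. (Z \<omega>)^2) = variance Y" by (simp add: Z_eq)
  also have "\<dots> \<le> expectation (\<lambda>\<omega>. (Y \<omega>)^2)" by (simp add: variance_eq[OF int_Y int_Y2])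
  also have "\<dots> \<le> expectation (\<lambda>\<omega>. (f \<omega>)^2)"
    using int_Y2 sq abs_truncate_le_abs
    by (intro integral_mono) (auto simp: Y_def abs_le_square_iff[symmetric])
  finally show "expectation (\<lambda>\<omega>. (Z \<omega>)^2) \<le> expectation (\<lambda>\<omega>. (f \<omega>)^2)" .
qed

text \<open>Since \<open>f\<close> is centred, the mean of its truncation is minus the mean of \<open>f\<close> on the tail
  event, where \<open>\<bar>f\<bar> \<le> e f\<^sup>2 / 2 + 1 / (2 e)\<close>.\<close>

lemma abs_expectation_truncate_le:
  fixes f :: "'a \<Rightarrow> real"
  assumes f: "f \<in> borel_measurable M" and sq: "integrable M (\<lambda>\<omega>. (f \<omega>)^2)"
    and mean: "expectation f = 0" and e: "e > 0"
  shows "\<bar>expectation (\<lambda>\<omega>. truncate T (f \<omega>))\<bar>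
    \<le> e / 2 * expectation (\<lambda>\<omega>. (f \<omega>)^2) + prob {\<omega> \<in> space M. T < \<bar>f \<omega>\<bar>} / (2 * e)"
proof -
  define A where "A = {\<omega> \<in> space M. T < \<bar>f \<omega>\<bar>}"
  have A: "A \<in> events" using f unfolding A_def by measurable
  have int_f: "integrable M f" by (rule square_integrable_imp_integrable[OF f sq])
  have int_tr: "integrable M (\<lambda>\<omega>. truncate T (f \<omega>))"
    using int_f f abs_truncate_le_abs by (intro Bochner_Integration.integrable_bound[OF int_f]) auto
  have int_bound: "integrable M (\<lambda>\<omega>. e * (f \<omega>)^2 / 2 + indicator A \<omega> / (2 * e))"
    using sq A by (intro Bochner_Integration.integrable_add integrable_divide integrable_real_indicator)
      (auto simp: less_top[symmetric])
  have "\<bar>expectation (\<lambda>\<omega>. truncate T (f \<omega>))\<bar> = \<bar>expectation (\<lambda>\<omega>. f \<omega> - truncate T (f \<omega>))\<bar>"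
    using int_f int_tr mean by simp
  also have "\<dots> \<le> expectation (\<lambda>\<omega>. \<bar>f \<omega> - truncate T (f \<omega>)\<bar>)" by (rule integral_abs_bound)
  also have "\<dots> \<le> expectation (\<lambda>\<omega>. e * (f \<omega>)^2 / 2 + indicator A \<omega> / (2 * e))"
    using int_f int_tr int_bound abs_diff_truncate_le[OF e]
    by (intro integral_mono) (auto simp: A_def indicator_def)
  also have "\<dots> = e / 2 * expectation (\<lambda>\<omega>. (f \<omega>)^2) + prob A / (2 * e)"
    using sq A by (simp add: less_top[symmetric])
  finally show ?thesis by (simp add: A_def)
qed

lemma sum_abs_expectation_truncate_le:
  fixes X :: "'i \<Rightarrow> 'a \<Rightarrow> real"
  assumes meas: "\<And>i. i \<in> I \<Longrightarrow> X i \<in> borel_measurable M"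
    and sq: "\<And>i. i \<in> I \<Longrightarrow> integrable M (\<lambda>\<omega>. (X i \<omega>)^2)"
    and mean: "\<And>i. i \<in> I \<Longrightarrow> expectation (X i) = 0"
    and var: "(\<Sum>i\<in>I. expectation (\<lambda>\<omega>. (X i \<omega>)^2)) \<le> V"
    and r: "r > 0"
  shows "(\<Sum>i\<in>I. \<bar>expectation (\<lambda>\<omega>. truncate T (X i \<omega>))\<bar>)
    \<le> V / r + r / 4 * (\<Sum>i\<in>I. prob {\<omega> \<in> space M. T < \<bar>X i \<omega>\<bar>})"
proof -
  have "(\<Sum>i\<in>I. \<bar>expectation (\<lambda>\<omega>. truncate T (X i \<omega>))\<bar>)
      \<le> (\<Sum>i\<in>I. expectation (\<lambda>\<omega>. (X i \<omega>)^2) / r + r / 4 * prob {\<omega> \<in> space M. T < \<bar>X i \<omega>\<bar>})"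
    using abs_expectation_truncate_le[OF meas sq mean, of _ "2 / r" T] r
    by (intro sum_mono) (simp add: field_simps)
  also have "\<dots> \<le> V / r + r / 4 * (\<Sum>i\<in>I. prob {\<omega> \<in> space M. T < \<bar>X i \<omega>\<bar>})"
    using var r
    by (simp add: sum.distrib sum_divide_distrib[symmetric] sum_distrib_left divide_right_mono)
  finally show ?thesis .
qed

lemma prob_abs_sum_ge_le_truncation:
  fixes X :: "'i \<Rightarrow> 'a \<Rightarrow> real"
  assumes fin: "finite I" and meas: "\<And>i. i \<in> I \<Longrightarrow> X i \<in> borel_measurable M"
    and shift: "(\<Sum>i\<in>I. \<bar>c i\<bar>) \<le> \<delta>"
  shows "prob {\<omega> \<in> space M. r \<le> \<bar>\<Sum>i\<in>I. X i \<omega>\<bar>}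
    \<le> (\<Sum>i\<in>I. prob {\<omega> \<in> space M. T < \<bar>X i \<omega>\<bar>})
      + prob {\<omega> \<in> space M. r - \<delta> \<le> \<bar>\<Sum>i\<in>I. truncate T (X i \<omega>) - c i\<bar>}"
proof -
  define A where "A = (\<Union>i\<in>I. {\<omega> \<in> space M. T < \<bar>X i \<omega>\<bar>})"
  define B where "B = {\<omega> \<in> space M. r - \<delta> \<le> \<bar>\<Sum>i\<in>I. truncate T (X i \<omega>) - c i\<bar>}"
  have tail_events: "{\<omega> \<in> space M. T < \<bar>X i \<omega>\<bar>} \<in> events" if "i \<in> I" for i
    using meas[OF that] by measurable
  then have A: "A \<in> events" using fin by (auto simp: A_def)
  have "(\<lambda>\<omega>. \<Sum>i\<in>I. truncate T (X i \<omega>) - c i) \<in> borel_measurable M"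
    using meas by (auto intro!: borel_measurable_sum)
  then have B: "B \<in> events" unfolding B_def by measurable
  have "{\<omega> \<in> space M. r \<le> \<bar>\<Sum>i\<in>I. X i \<omega>\<bar>} \<subseteq> A \<union> B"
  proof (intro subsetI)
    fix \<omega> assume \<omega>: "\<omega> \<in> {\<omega> \<in> space M. r \<le> \<bar>\<Sum>i\<in>I. X i \<omega>\<bar>}"
    show "\<omega> \<in> A \<union> B"
    proof (cases "\<omega> \<in> A")
      case False
      then have "(\<Sum>i\<in>I. X i \<omega>) = (\<Sum>i\<in>I. truncate T (X i \<omega>) - c i) + (\<Sum>i\<in>I. c i)"
        using \<omega> by (auto simp: A_def truncate_def sum.distrib[symmetric] intro!: sum.cong)
      moreover have "\<bar>\<Sum>i\<in>I. c i\<bar> \<le> \<delta>" using order.trans[OF sum_abs shift] .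
      ultimately show ?thesis using \<omega> by (auto simp: B_def)
    qed simp
  qed
  then have "prob {\<omega> \<in> space M. r \<le> \<bar>\<Sum>i\<in>I. X i \<omega>\<bar>} \<le> prob A + prob B"
    using A B by (intro order.trans[OF finite_measure_mono measure_Un_le]) auto
  also have "prob A \<le> (\<Sum>i\<in>I. prob {\<omega> \<in> space M. T < \<bar>X i \<omega>\<bar>})"
    unfolding A_def using tail_events by (intro finite_measure_subadditive_finite[OF fin]) auto
  finally show ?thesis by (simp add: B_def)
qed

text \<open>Shifting by the means of the truncations costs at most \<open>r / 5\<close>; Bernstein's inequality
  with \<open>\<lambda> = r / (4 V)\<close> then bounds the remaining deviation \<open>4 r / 5\<close> by \<open>2 exp (-11 r\<^sup>2 / (80 V))\<close>.\<close>

lemma indep_sum_abs_ge_by_truncation: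
  fixes X :: "'i \<Rightarrow> 'a \<Rightarrow> real"
  assumes fin: "finite I" and indep: "indep_vars (\<lambda>_. borel) X I"
    and meas: "\<And>i. i \<in> I \<Longrightarrow> X i \<in> borel_measurable M"
    and sq: "\<And>i. i \<in> I \<Longrightarrow> integrable M (\<lambda>\<omega>. (X i \<omega>)^2)"
    and mean: "\<And>i. i \<in> I \<Longrightarrow> expectation (X i) = 0"
    and var: "(\<Sum>i\<in>I. expectation (\<lambda>\<omega>. (X i \<omega>)^2)) \<le> V"
    and T: "T > 0" and r: "r > 0" and Tr: "T * r \<le> V"
    and tails: "(\<Sum>i\<in>I. prob {\<omega> \<in> space M. T < \<bar>X i \<omega>\<bar>}) \<le> exp (- (r^2 / (10 * V)))"
    and small: "exp (- (r^2 / (10 * V))) < 1 / 3"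
  shows "prob {\<omega> \<in> space M. r \<le> \<bar>\<Sum>i\<in>I. X i \<omega>\<bar>} \<le> 3 * exp (- (r^2 / (10 * V)))"
proof -
  define Q where "Q = exp (- (r^2 / (10 * V)))"
  define mu where "mu i = expectation (\<lambda>\<omega>. truncate T (X i \<omega>))" for i
  define Z where "Z i \<omega> = truncate T (X i \<omega>) - mu i" for i \<omega>
  note Z_props = centred_truncation[OF meas sq less_imp_le[OF T], folded mu_def Z_def]
  have V: "V > 0" using Tr mult_pos_pos[OF T r] by linarith
  have "1 / 3 \<le> exp (-1 :: real)" using exp_le by (simp add: exp_minus field_simps)
  then have "Q < exp (-1)" using small unfolding Q_def by linarith
  then have "1 < r^2 / (10 * V)" by (simp add: Q_def)
  then have "V / r \<le> r / 10" using V r by (simp add: field_simps power2_eq_square)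
  moreover have "r / 4 * (\<Sum>i\<in>I. prob {\<omega> \<in> space M. T < \<bar>X i \<omega>\<bar>}) \<le> r / 12"
    using tails small r by (simp add: mult_left_mono)
  ultimately have mu_sum: "(\<Sum>i\<in>I. \<bar>mu i\<bar>) \<le> r / 5"
    using sum_abs_expectation_truncate_le[OF meas sq mean var r, of T] r unfolding mu_def by linarith
  define l where "l = r / (4 * V)"
  have "prob {\<omega> \<in> space M. r - r / 5 \<le> \<bar>\<Sum>i\<in>I. Z i \<omega>\<bar>} \<le> 2 * exp (- l * (r - r / 5) + l^2 * V)"
  proof (rule Bernstein_ineq_abs_ge[OF fin, where K = "2 * T"])
    show "indep_vars (\<lambda>_. borel) Z I"
      unfolding Z_def by (rule indep_vars_compose2[OF indep, where Y = "\<lambda>i x. truncate T x - mu i"]) auto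
    show "(\<Sum>i\<in>I. expectation (\<lambda>\<omega>. (Z i \<omega>)^2)) \<le> V"
      using order.trans[OF sum_mono[OF Z_props(4)] var] .
    show "l * (2 * T) \<le> 1" using Tr V by (simp add: l_def field_simps)
  qed (use Z_props l_def r V in auto)
  also have "\<dots> \<le> 2 * Q"
    using V by (simp add: Q_def l_def field_simps power2_eq_square)
  finally have "prob {\<omega> \<in> space M. r - r / 5 \<le> \<bar>\<Sum>i\<in>I. Z i \<omega>\<bar>} \<le> 2 * Q" .
  then show ?thesis
    using prob_abs_sum_ge_le_truncation[where X = X and r = r and T = T, OF fin meas mu_sum] tails
    unfolding Z_def Q_def by linarith
qed

lemma sum_exp_moment_tails_le:
  fixes X :: "'i \<Rightarrow> 'a \<Rightarrow> real"
  assumes meas: "\<And>i. i \<in> I \<Longrightarrow> X i \<in> borel_measurable M"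
    and moment: "\<And>i. i \<in> I \<Longrightarrow> (\<integral>\<^sup>+ \<omega>. ennreal (exp (\<bar>X i \<omega>\<bar> powr g / b powr g)) \<partial>M) \<le> 2"
    and g: "g > 0" and b: "b > 0" and s: "s > 0"
  shows "(\<Sum>i\<in>I. prob {\<omega> \<in> space M. b * s powr (1/g) < \<bar>X i \<omega>\<bar>}) \<le> 2 * card I * exp (- s)"
proof -
  have "(\<Sum>i\<in>I. prob {\<omega> \<in> space M. b * s powr (1/g) < \<bar>X i \<omega>\<bar>}) \<le> (\<Sum>i\<in>I. 2 * exp (- s))"
    using exp_moment_tail_le[OF meas moment g b s] by (intro sum_mono)
  then show ?thesis by simp
qed

text \<open>The truncation level \<open>b (log (2 n) + r\<^sup>2 / (10 V))\<^bsup>1/\<gamma>\<^esup>\<close> is chosen so that the \<open>n\<close> tail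
  probabilities add up to exactly \<open>exp (- r\<^sup>2 / (10 V))\<close>.\<close>

lemma indep_sum_abs_ge_of_exp_moments:
  fixes X :: "'i \<Rightarrow> 'a \<Rightarrow> real"
  assumes fin: "finite I" and nonempty: "I \<noteq> {}" and indep: "indep_vars (\<lambda>_. borel) X I"
    and meas: "\<And>i. i \<in> I \<Longrightarrow> X i \<in> borel_measurable M"
    and g: "g > 0" and b: "b > 0"
    and mean: "\<And>i. i \<in> I \<Longrightarrow> expectation (X i) = 0"
    and moment: "\<And>i. i \<in> I \<Longrightarrow> (\<integral>\<^sup>+ \<omega>. ennreal (exp (\<bar>X i \<omega>\<bar> powr g / b powr g)) \<partial>M) \<le> 2"
    and var: "variance (\<lambda>\<omega>. \<Sum>i\<in>I. X i \<omega>) \<le> V"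
    and r: "0 \<le> r"
    and r_le: "r \<le> sqrt V * min (sqrt V / (b * (2 * ln (2 * real (card I))) powr (1 / g)))
                                 ((sqrt V / b) powr (g / (2 + g)))"
    and small: "exp (- (r^2 / (10 * V))) < 1 / 3"
  shows "prob {\<omega> \<in> space M. r \<le> \<bar>\<Sum>i\<in>I. X i \<omega>\<bar>} \<le> 3 * exp (- (r^2 / (10 * V)))"
proof -
  define n where "n = real (card I)"
  define s where "s = ln (2 * n) + r^2 / (10 * V)"
  define T where "T = b * s powr (1 / g)"
  have n: "n \<ge> 1" using fin nonempty by (simp add: n_def Suc_le_eq card_gt_0_iff)
  have V: "V > 0"
  proof (rule ccontr)
    assume "\<not> V > 0"
    then have "r^2 / (10 * V) \<le> 0" by (intro divide_nonneg_nonpos) auto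
    then have "1 \<le> exp (- (r^2 / (10 * V)))" by simp
    then show False using small by linarith
  qed
  have "r \<noteq> 0" using small by auto
  then have r_pos: "r > 0" using r by simp
  have L: "ln (2 * n) > 0" using n by simp
  then have s: "s > 0" using V by (simp add: s_def add_pos_nonneg)
  have sq: "integrable M (\<lambda>\<omega>. (X i \<omega>)^2)" if "i \<in> I" for i
    using that by (intro integrable_square_of_exp_moment[OF meas moment g b])
  have "2 * n * exp (- s) = 2 * n * (exp (- ln (2 * n)) * exp (- (r^2 / (10 * V))))"
    by (simp add: s_def flip: exp_add)
  also have "\<dots> = exp (- (r^2 / (10 * V)))" using n by (simp add: exp_minus)
  finally have tails: "(\<Sum>i\<in>I. prob {\<omega> \<in> space M. T < \<bar>X i \<omega>\<bar>}) \<le> exp (- (r^2 / (10 * V)))"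
    using sum_exp_moment_tails_le[where X = X and I = I, OF meas moment g b s] by (simp add: T_def n_def)
  show ?thesis
  proof (rule indep_sum_abs_ge_by_truncation[OF fin indep meas sq mean _ _ r_pos _ tails small])
    show "(\<Sum>i\<in>I. expectation (\<lambda>\<omega>. (X i \<omega>)^2)) \<le> V"
      using variance_indep_sum_mean_zero[OF fin indep meas sq mean] var by simp
    show "T > 0" using b s by (simp add: T_def)
    show "T * r \<le> V"
      using truncation_level_times_radius_le[OF g b V r L] r_le by (simp add: T_def s_def n_def)
  qed
qed

end

theorem mainTheorem8:
  fixes M :: "'a measure" and X :: "nat \<Rightarrow> 'a \<Rightarrow> real"
    and m :: nat and \<gamma>0 b V r :: real
  assumes "prob_space M"
    and "m \<ge> 1"
    and "\<And>i. i \<in> {1..m} \<Longrightarrow> X i \<in> borel_measurable M"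
    and "prob_space.indep_vars M (\<lambda>_. borel) X {1..m}"
    and "\<gamma>0 > 0" and "b > 0"
    and "\<And>i. i \<in> {1..m} \<Longrightarrow> prob_space.expectation M (X i) = 0"
    and "\<And>i. i \<in> {1..m} \<Longrightarrow>
           (\<integral>\<^sup>+ \<omega>. ennreal (exp (\<bar>X i \<omega>\<bar> powr \<gamma>0 / b powr \<gamma>0)) \<partial>M) \<le> 2"
    and "V \<ge> prob_space.variance M (\<lambda>\<omega>. \<Sum>i=1..m. X i \<omega>)"
    and "0 \<le> r"
    and "r \<le> sqrt V * min (sqrt V / (b * (2 * ln (2 * real m)) powr (1 / \<gamma>0)))
                             ((sqrt V / b) powr (\<gamma>0 / (2 + \<gamma>0)))"
  shows "measure M {\<omega> \<in> space M. \<bar>\<Sum>i=1..m. X i \<omega>\<bar> \<ge> r} \<le> 3 * exp (- (r^2 / (10 * V)))"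
proof -
  interpret prob_space M by fact
  show ?thesis
  proof (cases "exp (- (r^2 / (10 * V))) < 1 / 3")
    case False
    then have "1 \<le> 3 * exp (- (r^2 / (10 * V)))" by simp
    then show ?thesis using prob_le_1 by (rule order.trans[rotated])
  next
    case True
    have "prob {\<omega> \<in> space M. r \<le> \<bar>\<Sum>i\<in>{1..m}. X i \<omega>\<bar>} \<le> 3 * exp (- (r^2 / (10 * V)))"
      using assms(2-11) True by (intro indep_sum_abs_ge_of_exp_moments) auto
    then show ?thesis by simp
  qed
qed

end
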